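(* For all $n\geq 1$, $s_{n,2}(112,122)=c_n=\frac{1}{n+1}\binom{2n}{n}$, the $n$-th Catalan number.
   Context: For positive integers $n,m$, $[n]_m$ denotes the regular multiset $\{1^m,\ldots,n^m\}$, and a permutation of $[n]_m$ is a sequence of length $nm$ in which each $i\in[n]$ appears exactly $m$ times. A sequence $\sigma$ contains a pattern $\pi=\pi_1\cdots\pi_k$ if it has a subsequence $\sigma_{i_1}\cdots\sigma_{i_k}$ ($i_1<\dots<i_k$) order-isomorphic to $\pi$, i.e. $\sigma_{i_a}<\sigma_{i_b}\iff\pi_a<\pi_b$ and $\sigma_{i_a}=\sigma_{i_b}\iff\pi_a=\pi_b$; otherwise it avoids $\pi$. $s_{n,m}(\Pi)$ is the number of permutations of $[n]_m$ avoiding all patterns in $\Pi$. *)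

theory Defs
  imports Main
begin

definition multiset_perms :: "nat \<Rightarrow> nat \<Rightarrow> nat list set" where
  "multiset_perms n m =
     {\<sigma>. length \<sigma> = n * m \<and> set \<sigma> \<subseteq> {1..n} \<and>
          (\<forall>i\<in>{1..n}. count_list \<sigma> i = m)}"

definition contains :: "nat list \<Rightarrow> nat list \<Rightarrow> bool" where
  "contains \<sigma> \<pi> \<longleftrightarrow>
     (\<exists>idx :: nat \<Rightarrow> nat.
        (\<forall>a b. a < b \<and> b < length \<pi> \<longrightarrow> idx a < idx b) \<and>
        (\<forall>a < length \<pi>. idx a < length \<sigma>) \<and>
        (\<forall>a < length \<pi>. \<forall>b < length \<pi>.
            (\<sigma> ! idx a < \<sigma> ! idx b \<longleftrightarrow> \<pi> ! a < \<pi> ! b) \<and>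
            (\<sigma> ! idx a = \<sigma> ! idx b \<longleftrightarrow> \<pi> ! a = \<pi> ! b)))"

definition avoids :: "nat list \<Rightarrow> nat list \<Rightarrow> bool" where
  "avoids \<sigma> \<pi> \<longleftrightarrow> \<not> contains \<sigma> \<pi>"

definition s_count :: "nat \<Rightarrow> nat \<Rightarrow> nat list set \<Rightarrow> nat" where
  "s_count n m \<Pi> = card {\<sigma> \<in> multiset_perms n m. \<forall>\<pi>\<in>\<Pi>. avoids \<sigma> \<pi>}"

end

theory Submission
  imports Defs
begin

text \<open>Mark each letter of a permutation of \<open>[n]\<^sub>2\<close> by \<open>True\<close> at its first and by
  \<open>False\<close> at its second occurrence. Every prefix contains at most two copies of each of its
  letters, so the resulting word is a ballot word with \<open>n\<close> letters of each kind. In an avoider of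
  \<open>112\<close> and \<open>122\<close> the first occurrences appear in decreasing order (a later, larger letter
  would give \<open>122\<close>), and so do the second occurrences (otherwise \<open>112\<close>); hence the \<open>k\<close>-th
  \<open>True\<close> and the \<open>k\<close>-th \<open>False\<close> both carry the letter \<open>n + 1 - k\<close>. Conversely this recipe
  turns every ballot word into an avoider, so avoiders are counted by the ballot numbers, i.e. by
  the Catalan numbers.\<close>

lemma count_list_take_le: "count_list (take k xs) x \<le> count_list xs x"
  by (metis append_take_drop_id count_list_append le_add1)

lemma count_list_take_mono: "i \<le> j \<Longrightarrow> count_list (take i xs) x \<le> count_list (take j xs) x"
  by (metis count_list_take_le min.absorb1 take_take)

lemma count_list_take_Suc:
  "i < length xs \<Longrightarrow>
     count_list (take (Suc i) xs) x = count_list (take i xs) x + (if xs ! i = x then 1 else 0)"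
  by (simp add: take_Suc_conv_app_nth)

lemma count_list_take_nth_less:
  assumes "i < j" "j \<le> length xs"
  shows "count_list (take i xs) (xs ! i) < count_list (take j xs) (xs ! i)"
proof -
  have "count_list (take i xs) (xs ! i) < count_list (take (Suc i) xs) (xs ! i)"
    using assms by (simp add: count_list_take_Suc)
  also have "\<dots> \<le> count_list (take j xs) (xs ! i)"
    using assms by (intro count_list_take_mono) simp
  finally show ?thesis .
qed

lemma ex_kth_occurrence:
  assumes "k < count_list (take i xs) x"
  shows "\<exists>j < i. xs ! j = x \<and> count_list (take j xs) x = k"
  using assms
proof (induction i)
  case (Suc i)
  show ?case
  proof (cases "k < count_list (take i xs) x")
    case True
    then show ?thesis using Suc.IH less_SucI by blast
  next
    case False
    have "i < length xs"
    proof (rule ccontr)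
      assume "\<not> i < length xs"
      then have "take (Suc i) xs = take i xs" by simp
      then show False using Suc.prems False by simp
    qed
    then show ?thesis
      using Suc.prems False by (auto simp: count_list_take_Suc split: if_splits)
  qed
qed simp

lemma two_occurrences:
  assumes "1 < count_list s v"
  shows "\<exists>q r. q < r \<and> r < length s \<and> s ! q = v \<and> s ! r = v"
proof -
  obtain r where r: "r < length s" "s ! r = v" "count_list (take r s) v = 1"
    using ex_kth_occurrence[of 1 "length s" s v] assms by auto
  then obtain q where "q < r" "s ! q = v"
    using ex_kth_occurrence[of 0 r s v] by auto
  with r show ?thesis by blast
qed

lemma list_eq_by_first_difference:
  assumes "length xs = length ys"
    and "\<And>i. i < length xs \<Longrightarrow> take i xs = take i ys \<Longrightarrow> xs ! i = ys ! i"
  shows "xs = ys"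
proof -
  have "take i xs = take i ys" if "i \<le> length xs" for i
    using that
  proof (induction i)
    case (Suc i)
    then show ?case
      using assms by (simp add: take_Suc_conv_app_nth)
  qed simp
  then show ?thesis
    using assms(1) by (metis order_refl take_all)
qed

section \<open>Ballot words\<close>

definition ballot :: "bool list \<Rightarrow> bool" where
  "ballot w \<longleftrightarrow> (\<forall>k. count_list (take k w) False \<le> count_list (take k w) True)"

definition ballot_words :: "nat \<Rightarrow> nat \<Rightarrow> bool list set" where
  "ballot_words a b = {w. count_list w True = a \<and> count_list w False = b \<and> ballot w}"

lemma length_eq_count_True_False: "length w = count_list w True + count_list w False"
  by (induction w) auto

lemma ballot_iff_prefixes:
  "ballot w \<longleftrightarrow> (\<forall>k \<le> length w. count_list (take k w) False \<le> count_list (take k w) True)"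
  unfolding ballot_def by (metis nat_le_linear take_all)

lemma ballot_Nil [simp]: "ballot []"
  unfolding ballot_def by simp

lemma ballot_snoc:
  "ballot (w @ [x]) \<longleftrightarrow> ballot w \<and> count_list (w @ [x]) False \<le> count_list (w @ [x]) True"
  by (auto simp: ballot_iff_prefixes le_Suc_eq)

lemma ballot_count_le: "ballot w \<Longrightarrow> count_list w False \<le> count_list w True"
  unfolding ballot_def by (metis order_refl take_all)

lemma ballot_False_count_less:
  assumes "ballot w" "i < length w" "\<not> w ! i"
  shows "count_list (take i w) False < count_list (take i w) True"
proof -
  have "count_list (take (Suc i) w) False \<le> count_list (take (Suc i) w) True"
    using assms(1) unfolding ballot_def by blast
  then show ?thesis using assms(2,3) by (simp add: count_list_take_Suc)
qed

lemma finite_ballot_words: "finite (ballot_words a b)"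
proof (rule finite_subset)
  show "ballot_words a b \<subseteq> {w. set w \<subseteq> UNIV \<and> length w = a + b}"
    unfolding ballot_words_def using length_eq_count_True_False by auto
  show "finite {w :: bool list. set w \<subseteq> UNIV \<and> length w = a + b}"
    by (rule finite_lists_length_eq) simp
qed

lemma ballot_words_empty: "a < b \<Longrightarrow> ballot_words a b = {}"
  unfolding ballot_words_def using ballot_count_le by fastforce

lemma ballot_words_0_0: "ballot_words 0 0 = {[]}"
  unfolding ballot_words_def
  by (auto, metis length_eq_count_True_False add_0 length_0_conv)

lemma ballot_words_snoc_decomp:
  assumes "0 < a" "b \<le> a"
  shows "ballot_words a b = (\<lambda>w. w @ [True]) ` ballot_words (a - 1) b \<union>
           (if b = 0 then {} else (\<lambda>w. w @ [False]) ` ballot_words a (b - 1))"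
proof (intro set_eqI iffI)
  fix v assume v: "v \<in> ballot_words a b"
  then have "v \<noteq> []" using assms unfolding ballot_words_def by auto
  then obtain w x where "v = w @ [x]" by (metis rev_exhaust)
  with v show "v \<in> (\<lambda>w. w @ [True]) ` ballot_words (a - 1) b \<union>
           (if b = 0 then {} else (\<lambda>w. w @ [False]) ` ballot_words a (b - 1))"
    unfolding ballot_words_def by (cases x) (auto simp: ballot_snoc)
next
  fix v assume "v \<in> (\<lambda>w. w @ [True]) ` ballot_words (a - 1) b \<union>
           (if b = 0 then {} else (\<lambda>w. w @ [False]) ` ballot_words a (b - 1))"
  then show "v \<in> ballot_words a b"
    using assms unfolding ballot_words_def by (auto simp: ballot_snoc split: if_splits)
qed

lemma card_ballot_words_snoc:
  assumes "0 < a" "b \<le> a"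
  shows "card (ballot_words a b) =
           card (ballot_words (a - 1) b) + (if b = 0 then 0 else card (ballot_words a (b - 1)))"
proof -
  have "inj (\<lambda>w. w @ [x])" for x :: bool by (rule injI) simp
  then have "card ((\<lambda>w. w @ [x]) ` ballot_words c d) = card (ballot_words c d)" for x c d
    by (meson card_image inj_on_subset subset_UNIV)
  moreover have "(\<lambda>w. w @ [True]) ` A \<inter> (\<lambda>w. w @ [False]) ` B = {}" for A B by auto
  ultimately show ?thesis
    using ballot_words_snoc_decomp[OF assms]
    by (simp add: card_Un_disjoint finite_ballot_words)
qed

text \<open>The ballot number \<open>(a + b choose b) - (a + b choose (b - 1))\<close>, stated without
  truncated subtraction.\<close>
lemma card_ballot_words:
  assumes "b \<le> a + 1"
  shows "card (ballot_words a b) + (if b = 0 then 0 else ((a + b) choose (b - 1))) = (a + b) choose b"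
  using assms
proof (induction "a + b" arbitrary: a b rule: less_induct)
  case less
  consider "a + b = 0" | "b = a + 1" | "0 < a" "b \<le> a"
    using less.prems by linarith
  then show ?case
  proof cases
    case 1
    then show ?thesis by (simp add: ballot_words_0_0)
  next
    case 2
    then show ?thesis using binomial_symmetric[of b "a + b"] by (simp add: ballot_words_empty)
  next
    case 3
    show ?thesis
    proof (cases b)
      case 0
      then show ?thesis
        using less.hyps[of "a - 1" 0] 3 card_ballot_words_snoc[OF 3] by simp
    next
      case (Suc c)
      define m where "m = a + c"
      have IH_True: "card (ballot_words (a - 1) b) + (m choose c) = m choose b"
        using less.hyps[of "a - 1" b] 3 Suc by (simp add: m_def)
      have IH_False: "card (ballot_words a c) + (if c = 0 then 0 else (m choose (c - 1))) = m choose c"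
        unfolding m_def by (rule less.hyps) (use 3 Suc in auto)
      have "Suc m choose c = (m choose c) + (if c = 0 then 0 else (m choose (c - 1)))"
        by (cases c) simp_all
      moreover have "Suc m choose b = (m choose b) + (m choose c)"
        using Suc by simp
      moreover have "a + b = Suc m" "b - 1 = c"
        using Suc by (simp_all add: m_def)
      ultimately show ?thesis
        using IH_True IH_False card_ballot_words_snoc[OF 3] Suc by simp
    qed
  qed
qed

lemma card_ballot_words_diag: "card (ballot_words n n) = ((2 * n) choose n) div (n + 1)"
proof (cases n)
  case 0
  then show ?thesis by (simp add: ballot_words_0_0)
next
  case (Suc k)
  have "card (ballot_words n n) + ((2 * n) choose (n - 1)) = (2 * n) choose n"
    using card_ballot_words[of n n] Suc by (simp add: mult_2)
  then have "(n + 1) * card (ballot_words n n) + (n + 1) * ((2 * n) choose (n - 1))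
      = (n + 1) * ((2 * n) choose n)"
    by (simp only: distrib_left [symmetric])
  moreover have "(n + 1) * ((2 * n) choose (n - 1)) = n * ((2 * n) choose n)"
    using Suc_times_binomial_add[of k "Suc k"] Suc by (simp add: mult_2 add.commute)
  ultimately have "(n + 1) * card (ballot_words n n) = (2 * n) choose n"
    by simp
  then show ?thesis
    by (metis add_eq_0_iff_both_eq_0 nonzero_mult_div_cancel_left one_neq_zero)
qed

lemma contains_112_iff:
  "contains s [1, 1, 2] \<longleftrightarrow>
     (\<exists>p q r. p < q \<and> q < r \<and> r < length s \<and> s ! p = s ! q \<and> s ! q < s ! r)"
proof
  assume "contains s [1, 1, 2]"
  then obtain idx where "\<forall>a b. a < b \<and> b < 3 \<longrightarrow> idx a < idx b" "\<forall>a < 3. idx a < length s"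
    "\<forall>a < 3. \<forall>b < 3. (s ! idx a < s ! idx b \<longleftrightarrow> [1, 1, 2 :: nat] ! a < [1, 1, 2] ! b) \<and>
        (s ! idx a = s ! idx b \<longleftrightarrow> [1, 1, 2 :: nat] ! a = [1, 1, 2] ! b)"
    unfolding contains_def by (auto simp: numeral_3_eq_3)
  then show "\<exists>p q r. p < q \<and> q < r \<and> r < length s \<and> s ! p = s ! q \<and> s ! q < s ! r"
    by (intro exI[of _ "idx 0"] exI[of _ "idx 1"] exI[of _ "idx 2"]) (simp add: numeral_3_eq_3)
next
  assume "\<exists>p q r. p < q \<and> q < r \<and> r < length s \<and> s ! p = s ! q \<and> s ! q < s ! r"
  then obtain p q r where "p < q" "q < r" "r < length s" "s ! p = s ! q" "s ! q < s ! r"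
    by blast
  then show "contains s [1, 1, 2]"
    unfolding contains_def
    by (intro exI[of _ "(!) [p, q, r]"]) (auto simp: numeral_3_eq_3 less_Suc_eq)
qed

lemma contains_122_iff:
  "contains s [1, 2, 2] \<longleftrightarrow>
     (\<exists>p q r. p < q \<and> q < r \<and> r < length s \<and> s ! p < s ! q \<and> s ! q = s ! r)"
proof
  assume "contains s [1, 2, 2]"
  then obtain idx where "\<forall>a b. a < b \<and> b < 3 \<longrightarrow> idx a < idx b" "\<forall>a < 3. idx a < length s"
    "\<forall>a < 3. \<forall>b < 3. (s ! idx a < s ! idx b \<longleftrightarrow> [1, 2, 2 :: nat] ! a < [1, 2, 2] ! b) \<and>
        (s ! idx a = s ! idx b \<longleftrightarrow> [1, 2, 2 :: nat] ! a = [1, 2, 2] ! b)"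
    unfolding contains_def by (auto simp: numeral_3_eq_3)
  then show "\<exists>p q r. p < q \<and> q < r \<and> r < length s \<and> s ! p < s ! q \<and> s ! q = s ! r"
    by (intro exI[of _ "idx 0"] exI[of _ "idx 1"] exI[of _ "idx 2"]) (simp add: numeral_3_eq_3)
next
  assume "\<exists>p q r. p < q \<and> q < r \<and> r < length s \<and> s ! p < s ! q \<and> s ! q = s ! r"
  then obtain p q r where "p < q" "q < r" "r < length s" "s ! p < s ! q" "s ! q = s ! r"
    by blast
  then show "contains s [1, 2, 2]"
    unfolding contains_def
    by (intro exI[of _ "(!) [p, q, r]"]) (auto simp: numeral_3_eq_3 less_Suc_eq)
qed

lemma set_multiset_perms:
  assumes "s \<in> multiset_perms n m" "0 < m"
  shows "set s = {1..n}"
proof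
  show "set s \<subseteq> {1..n}"
    using assms(1) unfolding multiset_perms_def by simp
  show "{1..n} \<subseteq> set s"
  proof
    fix x assume "x \<in> {1..n}"
    then have "count_list s x = m"
      using assms(1) unfolding multiset_perms_def by simp
    then show "x \<in> set s"
      using assms(2) count_list_0_iff[of s x] by simp
  qed
qed

lemma count_list_multiset_perms: "s \<in> multiset_perms n m \<Longrightarrow> v \<in> set s \<Longrightarrow> count_list s v = m"
  unfolding multiset_perms_def by auto

definition avoiders_112_122 :: "nat \<Rightarrow> nat list set" where
  "avoiders_112_122 n = {s \<in> multiset_perms n 2. avoids s [1, 1, 2] \<and> avoids s [1, 2, 2]}"

section \<open>From ballot words to avoiders\<close>

text \<open>The \<open>k\<close>-th \<open>True\<close> and the \<open>k\<close>-th \<open>False\<close> of \<open>w\<close> both become the letter \<open>n + 1 - k\<close>.\<close>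
definition perm_of_ballot :: "nat \<Rightarrow> bool list \<Rightarrow> nat list" where
  "perm_of_ballot n w = map (\<lambda>i. n - count_list (take i w) (w ! i)) [0..<length w]"

lemma length_perm_of_ballot [simp]: "length (perm_of_ballot n w) = length w"
  by (simp add: perm_of_ballot_def)

lemma nth_perm_of_ballot:
  "i < length w \<Longrightarrow> perm_of_ballot n w ! i = n - count_list (take i w) (w ! i)"
  by (simp add: perm_of_ballot_def)

lemma ballot_words_rank_less:
  assumes "w \<in> ballot_words n n" "i < length w"
  shows "count_list (take i w) (w ! i) < n"
  using count_list_take_nth_less[of i "length w" w] assms
  unfolding ballot_words_def by (cases "w ! i") auto

lemma ballot_words_rank_strict_mono:
  assumes "w \<in> ballot_words n n" "i < j" "j < length w" "w ! j \<or> \<not> w ! i"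
  shows "count_list (take i w) (w ! i) < count_list (take j w) (w ! j)"
proof (cases "w ! i = w ! j")
  case True
  then show ?thesis using count_list_take_nth_less[of i j w] assms(2,3) by simp
next
  case False
  with assms(4) have "\<not> w ! i" "w ! j" by auto
  have "count_list (take i w) False < count_list (take i w) True"
    using assms \<open>\<not> w ! i\<close> unfolding ballot_words_def by (intro ballot_False_count_less) auto
  also have "\<dots> \<le> count_list (take j w) True"
    using assms(2) by (intro count_list_take_mono) simp
  finally show ?thesis using \<open>\<not> w ! i\<close> \<open>w ! j\<close> by simp
qed

lemma ballot_words_ex_kth_occurrence:
  assumes "w \<in> ballot_words n n" "k < n"
  shows "\<exists>j < length w. w ! j = x \<and> count_list (take j w) x = k"
  using ex_kth_occurrence[of k "length w" w x] assms
  unfolding ballot_words_def by (cases x) auto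

lemma perm_of_ballot_descent:
  assumes "w \<in> ballot_words n n" "i < j" "j < length w" "w ! j \<or> \<not> w ! i"
  shows "perm_of_ballot n w ! j < perm_of_ballot n w ! i"
  using ballot_words_rank_strict_mono[OF assms] ballot_words_rank_less[OF assms(1,3)] assms(2,3)
  by (simp add: nth_perm_of_ballot)

lemma perm_of_ballot_avoids_112:
  assumes "w \<in> ballot_words n n"
  shows "avoids (perm_of_ballot n w) [1, 1, 2]"
  unfolding avoids_def
proof
  assume "contains (perm_of_ballot n w) [1, 1, 2]"
  then obtain p q r where pqr: "p < q" "q < r" "r < length w"
    "perm_of_ballot n w ! p = perm_of_ballot n w ! q" "perm_of_ballot n w ! q < perm_of_ballot n w ! r"
    unfolding contains_112_iff by auto
  have "\<not> (w ! q \<or> \<not> w ! p)"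
    using perm_of_ballot_descent[OF assms pqr(1)] pqr by auto
  moreover have "\<not> (w ! r \<or> \<not> w ! q)"
    using perm_of_ballot_descent[OF assms pqr(2)] pqr by auto
  ultimately show False by blast
qed

lemma perm_of_ballot_avoids_122:
  assumes "w \<in> ballot_words n n"
  shows "avoids (perm_of_ballot n w) [1, 2, 2]"
  unfolding avoids_def
proof
  assume "contains (perm_of_ballot n w) [1, 2, 2]"
  then obtain p q r where pqr: "p < q" "q < r" "r < length w"
    "perm_of_ballot n w ! p < perm_of_ballot n w ! q" "perm_of_ballot n w ! q = perm_of_ballot n w ! r"
    unfolding contains_122_iff by auto
  have "\<not> (w ! q \<or> \<not> w ! p)"
    using perm_of_ballot_descent[OF assms pqr(1)] pqr by auto
  moreover have "\<not> (w ! r \<or> \<not> w ! q)"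
    using perm_of_ballot_descent[OF assms pqr(2)] pqr by auto
  ultimately show False by blast
qed

lemma perm_of_ballot_in_multiset_perms:
  assumes w: "w \<in> ballot_words n n"
  shows "perm_of_ballot n w \<in> multiset_perms n 2"
proof -
  let ?s = "perm_of_ballot n w"
  define A where "A v x = {i. i < length w \<and> w ! i = x \<and> ?s ! i = v}" for v x
  have finite: "finite (A v x)" for v x
    by (simp add: A_def)
  have "card (A v x) = 1" if v: "v \<in> {1..n}" for v x
  proof (rule antisym)
    have "?s ! j < ?s ! i" if "i \<in> A v x" "j \<in> A v x" "i < j" for i j
      using that perm_of_ballot_descent[OF w, of i j] by (auto simp: A_def)
    then have "\<forall>i \<in> A v x. \<forall>j \<in> A v x. i = j"
      by (metis (mono_tags, lifting) A_def linorder_neqE_nat mem_Collect_eq order_less_irrefl)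
    then show "card (A v x) \<le> 1"
      using card_le_Suc0_iff_eq[OF finite] by simp
    obtain j where "j < length w" "w ! j = x" "count_list (take j w) x = n - v"
      using ballot_words_ex_kth_occurrence[OF w, of "n - v" x] v by auto
    then have "j \<in> A v x"
      using v by (simp add: A_def nth_perm_of_ballot)
    then have "A v x \<noteq> {}"
      by blast
    then show "1 \<le> card (A v x)"
      using finite by (simp add: Suc_le_eq card_gt_0_iff)
  qed
  moreover have "count_list ?s v = card (A v True \<union> A v False)" for v
  proof -
    have "{i. i < length ?s \<and> v = ?s ! i} = A v True \<union> A v False"
      by (auto simp: A_def)
    then show ?thesis
      by (simp add: count_list_eq_length_filter length_filter_conv_card)
  qed
  moreover have "A v True \<inter> A v False = {}" for v
    by (auto simp: A_def)
  ultimately have "count_list ?s v = 2" if "v \<in> {1..n}" for v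
    using that finite by (simp add: card_Un_disjoint)
  moreover have "set ?s \<subseteq> {1..n}"
    using ballot_words_rank_less[OF w] by (auto simp: in_set_conv_nth nth_perm_of_ballot Suc_le_eq)
  moreover have "length ?s = n * 2"
    using w length_eq_count_True_False[of w] unfolding ballot_words_def by simp
  ultimately show ?thesis
    unfolding multiset_perms_def by blast
qed

section \<open>From avoiders to ballot words\<close>

definition first_occurrences :: "'a list \<Rightarrow> bool list" where
  "first_occurrences s = map (\<lambda>i. s ! i \<notin> set (take i s)) [0..<length s]"

lemma length_first_occurrences [simp]: "length (first_occurrences s) = length s"
  by (simp add: first_occurrences_def)

lemma nth_first_occurrences:
  "i < length s \<Longrightarrow> first_occurrences s ! i \<longleftrightarrow> s ! i \<notin> set (take i s)"
  by (simp add: first_occurrences_def)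

lemma first_occurrences_snoc: "first_occurrences (xs @ [x]) = first_occurrences xs @ [x \<notin> set xs]"
  by (auto simp: first_occurrences_def nth_append)

lemma take_first_occurrences: "take k (first_occurrences s) = first_occurrences (take k s)"
  by (auto simp: first_occurrences_def take_map min_def)

lemma count_first_occurrences_True: "count_list (first_occurrences xs) True = card (set xs)"
  by (induction xs rule: rev_induct)
    (simp add: first_occurrences_def, simp add: first_occurrences_snoc card_insert_if)

lemma count_first_occurrences_False:
  "count_list (first_occurrences xs) False + card (set xs) = length xs"
  by (induction xs rule: rev_induct)
    (simp add: first_occurrences_def, simp add: first_occurrences_snoc card_insert_if)

lemma ballot_first_occurrences:
  assumes "\<And>v. count_list s v \<le> 2"
  shows "ballot (first_occurrences s)"
  unfolding ballot_def
proof
  fix k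
  let ?t = "take k s"
  have "length ?t = (\<Sum>v \<in> set ?t. count_list ?t v)"
    by (simp add: sum_count_set)
  also have "\<dots> \<le> (\<Sum>v \<in> set ?t. 2)"
  proof (rule sum_mono)
    show "count_list ?t v \<le> 2" for v
      using assms[of v] count_list_take_le[of k s v] by linarith
  qed
  finally have "length ?t \<le> 2 * card (set ?t)"
    by simp
  then show "count_list (take k (first_occurrences s)) False \<le> count_list (take k (first_occurrences s)) True"
    using count_first_occurrences_True[of ?t] count_first_occurrences_False[of ?t]
    by (simp add: take_first_occurrences)
qed

lemma first_occurrences_in_ballot_words:
  assumes s: "s \<in> multiset_perms n 2"
  shows "first_occurrences s \<in> ballot_words n n"
proof -
  have "count_list s v \<le> 2" for v
    using count_list_multiset_perms[OF s, of v] by (cases "v \<in> set s") simp_all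
  moreover have "card (set s) = n" "length s = 2 * n"
    using s set_multiset_perms[OF s] unfolding multiset_perms_def by simp_all
  ultimately show ?thesis
    unfolding ballot_words_def
    using count_first_occurrences_True[of s] count_first_occurrences_False[of s]
      ballot_first_occurrences[of s]
    by simp
qed

lemma first_occurrences_perm_of_ballot:
  assumes w: "w \<in> ballot_words n n"
  shows "first_occurrences (perm_of_ballot n w) = w"
proof (rule nth_equalityI)
  fix i assume "i < length (first_occurrences (perm_of_ballot n w))"
  then have i: "i < length w" by simp
  let ?s = "perm_of_ballot n w"
  have earlier: "?s ! i \<in> set (take i ?s) \<longleftrightarrow> (\<exists>j < i. ?s ! j = ?s ! i)"
    using i by (auto simp: in_set_conv_nth)
  show "first_occurrences ?s ! i = w ! i"
  proof (cases "w ! i")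
    case True
    then have "?s ! j \<noteq> ?s ! i" if "j < i" for j
      using perm_of_ballot_descent[OF w that i] by simp
    then have "?s ! i \<notin> set (take i ?s)"
      using earlier by blast
    then show ?thesis
      using True i by (simp add: nth_first_occurrences)
  next
    case False
    have "count_list (take i w) False < count_list (take i w) True"
      using w i False unfolding ballot_words_def by (intro ballot_False_count_less) auto
    from ex_kth_occurrence[OF this]
    obtain j where "j < i" "w ! j" "count_list (take j w) True = count_list (take i w) False"
      by auto
    then have "?s ! j = ?s ! i"
      using i False by (simp add: nth_perm_of_ballot)
    then have "?s ! i \<in> set (take i ?s)"
      using earlier \<open>j < i\<close> by blast
    then show ?thesis
      using False i by (simp add: nth_first_occurrences)
  qed
qed simp

text \<open>Otherwise both copies of \<open>v\<close> would follow position \<open>i\<close>, forming a \<open>122\<close>.\<close>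
lemma avoids_122_larger_occurs_before:
  assumes s: "s \<in> multiset_perms n 2" and avoids: "avoids s [1, 2, 2]"
    and i: "i < length s" and v: "s ! i < v" "v \<le> n"
  shows "v \<in> set (take i s)"
proof (rule ccontr)
  assume v_later: "v \<notin> set (take i s)"
  have "s ! i \<in> {1..n}"
    using i set_multiset_perms[OF s] by auto
  with v have "count_list s v = 2"
    using count_list_multiset_perms[OF s] set_multiset_perms[OF s] by simp
  then obtain q r where qr: "q < r" "r < length s" "s ! q = v" "s ! r = v"
    using two_occurrences[of s v] by auto
  have "\<not> q < i"
    using v_later qr by (auto simp: in_set_conv_nth)
  moreover have "q \<noteq> i"
    using qr v by auto
  ultimately have "contains s [1, 2, 2]"
    unfolding contains_122_iff using qr v by (metis linorder_neqE_nat)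
  with avoids show False
    unfolding avoids_def by blast
qed

text \<open>If the smaller letter \<open>s ! i\<close> is new, then the larger \<open>t ! i\<close> already occurred in the
  common prefix. If it is repeated, then no copy of \<open>t ! i\<close> follows it in \<open>s\<close>, so both copies
  lie in the common prefix and \<open>t ! i\<close> would be a third one.\<close>
lemma avoiders_112_122_first_difference:
  assumes s: "s \<in> avoiders_112_122 n" and t: "t \<in> avoiders_112_122 n"
    and i: "i < length s" and length: "length t = length s" and prefix: "take i s = take i t"
    and fo: "first_occurrences s ! i = first_occurrences t ! i"
  shows "\<not> s ! i < t ! i"
proof
  assume less: "s ! i < t ! i"
  have sp: "s \<in> multiset_perms n 2" and tp: "t \<in> multiset_perms n 2"
    and s112: "avoids s [1, 1, 2]" and s122: "avoids s [1, 2, 2]"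
    using s t unfolding avoiders_112_122_def by auto
  have ti: "i < length t"
    using i length by simp
  have t_i_le: "t ! i \<le> n"
    using ti set_multiset_perms[OF tp] by auto
  have new_iff: "s ! i \<in> set (take i s) \<longleftrightarrow> t ! i \<in> set (take i t)"
    using fo i ti by (simp add: nth_first_occurrences)
  show False
  proof (cases "s ! i \<in> set (take i s)")
    case False
    then show False
      using avoids_122_larger_occurs_before[OF sp s122 i less t_i_le] new_iff prefix by simp
  next
    case True
    then obtain p where p: "p < i" "s ! p = s ! i"
      by (auto simp: in_set_conv_nth)
    have "s ! r \<noteq> t ! i" if "i \<le> r" "r < length s" for r
    proof
      assume "s ! r = t ! i"
      with less that p have "contains s [1, 1, 2]"
        unfolding contains_112_iff by (metis le_neq_implies_less order_less_irrefl)
      with s112 show False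
        unfolding avoids_def by blast
    qed
    then have "t ! i \<notin> set (drop i s)"
      by (fastforce simp: in_set_conv_nth)
    then have "count_list s (t ! i) = count_list (take i s) (t ! i)"
      by (metis append_take_drop_id count_list_append count_notin add_0_right)
    moreover have "t ! i \<in> set s"
      using nth_mem[OF ti] set_multiset_perms[OF sp] set_multiset_perms[OF tp] by simp
    ultimately have "count_list (take i t) (t ! i) = 2"
      using count_list_multiset_perms[OF sp] prefix by simp
    moreover have "count_list (take (Suc i) t) (t ! i) \<le> 2"
      using count_list_take_le count_list_multiset_perms[OF tp] ti by (metis nth_mem)
    ultimately show False
      using ti by (simp add: count_list_take_Suc)
  qed
qed

lemma inj_on_first_occurrences: "inj_on first_occurrences (avoiders_112_122 n)"
proof (rule inj_onI)
  fix s t assume s: "s \<in> avoiders_112_122 n" and t: "t \<in> avoiders_112_122 n"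
    and fo: "first_occurrences s = first_occurrences t"
  have length: "length t = length s"
    using s t unfolding avoiders_112_122_def multiset_perms_def by simp
  show "s = t"
  proof (rule list_eq_by_first_difference[OF length[symmetric]])
    fix i assume i: "i < length s" and prefix: "take i s = take i t"
    have "\<not> s ! i < t ! i"
      using avoiders_112_122_first_difference[OF s t i length prefix] fo by simp
    moreover have "\<not> t ! i < s ! i"
      using avoiders_112_122_first_difference[OF t s _ length[symmetric] prefix[symmetric]] fo i length
      by simp
    ultimately show "s ! i = t ! i"
      by simp
  qed
qed

lemma bij_betw_first_occurrences:
  "bij_betw first_occurrences (avoiders_112_122 n) (ballot_words n n)"
proof (rule bij_betw_imageI)
  show "inj_on first_occurrences (avoiders_112_122 n)"
    by (rule inj_on_first_occurrences)
  show "first_occurrences ` avoiders_112_122 n = ballot_words n n"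
  proof
    show "first_occurrences ` avoiders_112_122 n \<subseteq> ballot_words n n"
      using first_occurrences_in_ballot_words unfolding avoiders_112_122_def by auto
    show "ballot_words n n \<subseteq> first_occurrences ` avoiders_112_122 n"
    proof
      fix w assume w: "w \<in> ballot_words n n"
      then have "perm_of_ballot n w \<in> avoiders_112_122 n"
        unfolding avoiders_112_122_def
        using perm_of_ballot_in_multiset_perms perm_of_ballot_avoids_112 perm_of_ballot_avoids_122
        by blast
      then show "w \<in> first_occurrences ` avoiders_112_122 n"
        using first_occurrences_perm_of_ballot[OF w] by (metis image_eqI)
    qed
  qed
qed

theorem theorem2:
  fixes n :: nat
  assumes "n \<ge> 1"
  shows "s_count n 2 {[1,1,2], [1,2,2]} = ((2 * n) choose n) div (n + 1)"
proof -
  have "s_count n 2 {[1,1,2], [1,2,2]} = card (avoiders_112_122 n)"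
    unfolding s_count_def avoiders_112_122_def by simp
  also have "\<dots> = card (ballot_words n n)"
    by (rule bij_betw_same_card[OF bij_betw_first_occurrences])
  finally show ?thesis
    by (simp add: card_ballot_words_diag)
qed

end
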